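(* Let $\mathcal{C}$ be a polarity and $\mathcal{H}\subseteq\mathcal{C}_+$ a refinement of $\mathcal{C}$. Let $x$ be an object of $\mathcal{C}$ that is injective in the polarity $\mathcal{C}$, and let $\eta_x:x\to Ex$ be a completion of $x$ in $\mathcal{C}$ relative to $\mathcal{H}$. Then $\eta_x$ is an isomorphism, and $x$ is complete relative to $\mathcal{H}$.
   Context: A refinement of a category $\mathcal{C}$ is a subcategory containing all objects and all isomorphisms of $\mathcal{C}$. A polarity is a category $\mathcal{C}$ with two refinements $\mathcal{C}_+$ (positive arrows) and $\mathcal{C}_-$ (negative arrows). An object $x$ of a polarity is injective if for every positive arrow $g:a\to b$ and every negative arrow $f:a\to x$ there is an arrow $h:b\to x$ with $hg=f$. An object $z$ of a category is amphi-terminal if every object has at least one arrow to $z$ and $z$ has at most one arrow to any object. For an object $x$, let $x\downarrow_{\mathcal{H}}\mathcal{C}$ be the category whose objects are arrows $f:x\to a$ in $\mathcal{H}$, with morphisms from $f:x\to a$ to $g:x\to b$ the arrows $\xi:a\to b$ of $\mathcal{C}$ with $\xi f=g$. A completion of $x$ relative to $\mathcal{H}$ is an amphi-terminal object of $x\downarrow_{\mathcal{H}}\mathcal{C}$, and $x$ is complete relative to $\mathcal{H}$ if $1_x$ is such a completion. *)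

theory Defs
  imports Main
begin

text \<open>Categories given explicitly by objects, arrows, domain, codomain,
identities and composition (Comp g f is "g after f").\<close>

record ('o, 'a) cat =
  Obj  :: "'o set"
  Arr  :: "'a set"
  Dom  :: "'a \<Rightarrow> 'o"
  Cod  :: "'a \<Rightarrow> 'o"
  Id   :: "'o \<Rightarrow> 'a"
  Comp :: "'a \<Rightarrow> 'a \<Rightarrow> 'a"

definition category :: "('o, 'a) cat \<Rightarrow> bool" where
  "category C \<longleftrightarrow>
     (\<forall>f\<in>Arr C. Dom C f \<in> Obj C \<and> Cod C f \<in> Obj C) \<and>
     (\<forall>a\<in>Obj C. Id C a \<in> Arr C \<and> Dom C (Id C a) = a \<and> Cod C (Id C a) = a) \<and>
     (\<forall>f\<in>Arr C. \<forall>g\<in>Arr C. Cod C f = Dom C g \<longrightarrow>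
        Comp C g f \<in> Arr C \<and> Dom C (Comp C g f) = Dom C f \<and> Cod C (Comp C g f) = Cod C g) \<and>
     (\<forall>f\<in>Arr C. Comp C f (Id C (Dom C f)) = f \<and> Comp C (Id C (Cod C f)) f = f) \<and>
     (\<forall>f\<in>Arr C. \<forall>g\<in>Arr C. \<forall>h\<in>Arr C. Cod C f = Dom C g \<longrightarrow> Cod C g = Dom C h \<longrightarrow>
        Comp C h (Comp C g f) = Comp C (Comp C h g) f)"

definition iso :: "('o, 'a) cat \<Rightarrow> 'a \<Rightarrow> bool" where
  "iso C f \<longleftrightarrow> f \<in> Arr C \<and>
     (\<exists>g\<in>Arr C. Dom C g = Cod C f \<and> Cod C g = Dom C f \<and>
        Comp C g f = Id C (Dom C f) \<and> Comp C f g = Id C (Cod C f))"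

definition subcategory :: "('o, 'a) cat \<Rightarrow> 'a set \<Rightarrow> bool" where
  "subcategory C S \<longleftrightarrow> S \<subseteq> Arr C \<and>
     (\<forall>f\<in>S. Id C (Dom C f) \<in> S \<and> Id C (Cod C f) \<in> S) \<and>
     (\<forall>f\<in>S. \<forall>g\<in>S. Cod C f = Dom C g \<longrightarrow> Comp C g f \<in> S)"

definition refinement :: "('o, 'a) cat \<Rightarrow> 'a set \<Rightarrow> bool" where
  "refinement C S \<longleftrightarrow> subcategory C S \<and>
     (\<forall>a\<in>Obj C. Id C a \<in> S) \<and> (\<forall>f. iso C f \<longrightarrow> f \<in> S)"

definition polarity :: "('o, 'a) cat \<Rightarrow> 'a set \<Rightarrow> 'a set \<Rightarrow> bool" where
  "polarity C Pos Neg \<longleftrightarrow> category C \<and> refinement C Pos \<and> refinement C Neg"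

definition injective :: "('o, 'a) cat \<Rightarrow> 'a set \<Rightarrow> 'a set \<Rightarrow> 'o \<Rightarrow> bool" where
  "injective C Pos Neg x \<longleftrightarrow> x \<in> Obj C \<and>
     (\<forall>g\<in>Pos. \<forall>f\<in>Neg. Dom C g = Dom C f \<and> Cod C f = x \<longrightarrow>
        (\<exists>h\<in>Arr C. Dom C h = Cod C g \<and> Cod C h = x \<and> Comp C h g = f))"

text \<open>Objects of x \<down>_H C: arrows of H with domain x.
Morphisms from f to g: arrows xi of C from Cod f to Cod g with xi f = g.\<close>
definition slice_obj :: "('o, 'a) cat \<Rightarrow> 'a set \<Rightarrow> 'o \<Rightarrow> 'a \<Rightarrow> bool" where
  "slice_obj C H x f \<longleftrightarrow> f \<in> H \<and> Dom C f = x"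

definition slice_hom :: "('o, 'a) cat \<Rightarrow> 'a \<Rightarrow> 'a \<Rightarrow> 'a set" where
  "slice_hom C f g = {\<xi> \<in> Arr C. Dom C \<xi> = Cod C f \<and> Cod C \<xi> = Cod C g \<and> Comp C \<xi> f = g}"

text \<open>Amphi-terminal object z of x \<down>_H C: every object has at least one arrow
to z, and z has at most one arrow to any object.\<close>
definition completion :: "('o, 'a) cat \<Rightarrow> 'a set \<Rightarrow> 'o \<Rightarrow> 'a \<Rightarrow> bool" where
  "completion C H x z \<longleftrightarrow> slice_obj C H x z \<and>
     (\<forall>f. slice_obj C H x f \<longrightarrow> slice_hom C f z \<noteq> {}) \<and>
     (\<forall>f. slice_obj C H x f \<longrightarrow> (\<forall>\<xi>\<in>slice_hom C z f. \<forall>\<zeta>\<in>slice_hom C z f. \<xi> = \<zeta>))"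

definition complete :: "('o, 'a) cat \<Rightarrow> 'a set \<Rightarrow> 'o \<Rightarrow> bool" where
  "complete C H x \<longleftrightarrow> completion C H x (Id C x)"

end

theory Submission
  imports Defs
begin

text \<open>Since \<eta> is positive and \<open>1\<^sub>x\<close> is negative, injectivity of x yields a retraction
  h of \<eta>. Then \<open>\<eta> h\<close> and \<open>1\<^sub>E\<^sub>x\<close> are both endomorphisms of \<eta> in the slice category,
  and amphi-terminality forces them to agree, so h is inverse to \<eta>. Composing with h
  also turns the arrows into \<eta> witnessing the completion property into arrows
  into \<open>1\<^sub>x\<close>, while arrows out of \<open>1\<^sub>x\<close> are trivially unique.\<close>

lemma category_comp:
  assumes "category C" "f \<in> Arr C" "g \<in> Arr C" "Cod C f = Dom C g"
  shows "Comp C g f \<in> Arr C" "Dom C (Comp C g f) = Dom C f" "Cod C (Comp C g f) = Cod C g"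
  using assms unfolding category_def by blast+

lemma category_comp_assoc:
  assumes "category C" "f \<in> Arr C" "g \<in> Arr C" "h \<in> Arr C"
    and "Cod C f = Dom C g" "Cod C g = Dom C h"
  shows "Comp C h (Comp C g f) = Comp C (Comp C h g) f"
  using assms unfolding category_def by blast

lemma category_comp_Id_left:
  "category C \<Longrightarrow> f \<in> Arr C \<Longrightarrow> Comp C (Id C (Cod C f)) f = f"
  unfolding category_def by blast

lemma category_comp_Id_right:
  "category C \<Longrightarrow> f \<in> Arr C \<Longrightarrow> Comp C f (Id C (Dom C f)) = f"
  unfolding category_def by blast

lemma category_Cod_in_Obj:
  "category C \<Longrightarrow> f \<in> Arr C \<Longrightarrow> Cod C f \<in> Obj C"
  unfolding category_def by blast

lemma category_Id:
  assumes "category C" "a \<in> Obj C"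
  shows "Id C a \<in> Arr C" "Dom C (Id C a) = a" "Cod C (Id C a) = a"
  using assms unfolding category_def by blast+

lemma refinement_subset_Arr: "refinement C S \<Longrightarrow> S \<subseteq> Arr C"
  unfolding refinement_def subcategory_def by blast

lemma refinement_Id: "refinement C S \<Longrightarrow> a \<in> Obj C \<Longrightarrow> Id C a \<in> S"
  unfolding refinement_def by blast

lemma completion_slice_obj:
  "completion C H x \<eta> \<Longrightarrow> \<eta> \<in> H \<and> Dom C \<eta> = x"
  unfolding completion_def slice_obj_def by blast

lemma slice_hom_from_Id:
  assumes "category C" "x \<in> Obj C" "\<xi> \<in> slice_hom C (Id C x) f"
  shows "\<xi> = f"
  using assms category_Id[OF assms(1,2)] category_comp_Id_right[OF assms(1)]
  unfolding slice_hom_def by auto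

lemma injective_retraction:
  assumes "polarity C Pos Neg" "injective C Pos Neg x" "\<eta> \<in> Pos" "Dom C \<eta> = x"
  obtains h where "h \<in> Arr C" "Dom C h = Cod C \<eta>" "Cod C h = x" "Comp C h \<eta> = Id C x"
proof -
  have cat: "category C" and ref_Neg: "refinement C Neg" and x: "x \<in> Obj C"
    using assms(1,2) unfolding polarity_def injective_def by auto
  have "Id C x \<in> Neg"
    using refinement_Id[OF ref_Neg x] .
  moreover have "Dom C \<eta> = Dom C (Id C x)" "Cod C (Id C x) = x"
    using category_Id[OF cat x] assms(4) by simp_all
  ultimately have "\<exists>h\<in>Arr C. Dom C h = Cod C \<eta> \<and> Cod C h = x \<and> Comp C h \<eta> = Id C x"
    using assms(2,3) unfolding injective_def by blast
  then show thesis
    using that by blast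
qed

context
  fixes C :: "('o, 'a) cat" and H :: "'a set" and x :: 'o and \<eta> h :: 'a
  assumes cat: "category C" and ref_H: "refinement C H"
    and completion: "completion C H x \<eta>"
    and h: "h \<in> Arr C" "Dom C h = Cod C \<eta>" "Cod C h = x"
    and retraction: "Comp C h \<eta> = Id C x"
begin

private lemma arr_\<eta>: "\<eta> \<in> Arr C" "Dom C \<eta> = x"
  using completion_slice_obj[OF completion] refinement_subset_Arr[OF ref_H] by auto

lemma completion_retraction_inverse: "Comp C \<eta> h = Id C (Cod C \<eta>)"
proof -
  let ?E = "Cod C \<eta>"
  have \<eta>h: "Comp C \<eta> h \<in> Arr C" "Dom C (Comp C \<eta> h) = ?E" "Cod C (Comp C \<eta> h) = ?E"
    using category_comp[OF cat h(1) arr_\<eta>(1)] h arr_\<eta> by auto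
  have "Comp C (Comp C \<eta> h) \<eta> = Comp C \<eta> (Comp C h \<eta>)"
    using category_comp_assoc[OF cat arr_\<eta>(1) h(1) arr_\<eta>(1)] h arr_\<eta> by auto
  also have "\<dots> = \<eta>"
    using retraction category_comp_Id_right[OF cat arr_\<eta>(1)] arr_\<eta> by simp
  finally have "Comp C \<eta> h \<in> slice_hom C \<eta> \<eta>"
    using \<eta>h unfolding slice_hom_def by auto
  moreover have "Id C ?E \<in> slice_hom C \<eta> \<eta>"
    using category_Id[OF cat category_Cod_in_Obj[OF cat arr_\<eta>(1)]]
      category_comp_Id_left[OF cat arr_\<eta>(1)]
    unfolding slice_hom_def by auto
  moreover have "slice_obj C H x \<eta>"
    using completion_slice_obj[OF completion] unfolding slice_obj_def .
  ultimately show ?thesis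
    using completion unfolding completion_def by blast
qed

lemma iso_if_completion_has_retraction: "iso C \<eta>"
  unfolding iso_def using arr_\<eta> h retraction completion_retraction_inverse by auto

lemma complete_if_completion_has_retraction: "complete C H x"
proof -
  have x: "x \<in> Obj C"
    using category_Cod_in_Obj[OF cat h(1)] h(3) by simp
  note Id_x = category_Id[OF cat x]
  have Id_x_reachable: "slice_hom C f (Id C x) \<noteq> {}" if f: "slice_obj C H x f" for f
  proof -
    obtain \<xi> where \<xi>: "\<xi> \<in> Arr C" "Dom C \<xi> = Cod C f" "Cod C \<xi> = Cod C \<eta>" "Comp C \<xi> f = \<eta>"
      using completion f unfolding completion_def slice_hom_def by blast
    have f_arr: "f \<in> Arr C" "Dom C f = x"
      using f refinement_subset_Arr[OF ref_H] unfolding slice_obj_def by auto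
    have "Comp C (Comp C h \<xi>) f = Comp C h (Comp C \<xi> f)"
      using category_comp_assoc[OF cat f_arr(1) \<xi>(1) h(1)] \<xi> h by auto
    also have "\<dots> = Id C x"
      using \<xi> retraction by simp
    finally have "Comp C h \<xi> \<in> slice_hom C f (Id C x)"
      using category_comp[OF cat \<xi>(1) h(1)] \<xi> h Id_x unfolding slice_hom_def by auto
    then show ?thesis by blast
  qed
  have Id_x_obj: "slice_obj C H x (Id C x)"
    using refinement_Id[OF ref_H x] Id_x unfolding slice_obj_def by simp
  have Id_x_unique: "\<xi> = \<zeta>" if "\<xi> \<in> slice_hom C (Id C x) f" "\<zeta> \<in> slice_hom C (Id C x) f" for f \<xi> \<zeta>
    using slice_hom_from_Id[OF cat x that(1)] slice_hom_from_Id[OF cat x that(2)] by simp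
  show ?thesis
    unfolding complete_def completion_def
    using Id_x_obj Id_x_reachable Id_x_unique by metis
qed

end

theorem mainTheorem5:
  fixes C :: "('o, 'a) cat" and Pos Neg H :: "'a set" and x :: 'o and \<eta> :: 'a
  assumes "polarity C Pos Neg"
    and "refinement C H" and "H \<subseteq> Pos"
    and "injective C Pos Neg x"
    and "completion C H x \<eta>"
  shows "iso C \<eta> \<and> complete C H x"
proof -
  have cat: "category C"
    using assms(1) unfolding polarity_def by blast
  have "\<eta> \<in> Pos" "Dom C \<eta> = x"
    using completion_slice_obj[OF assms(5)] assms(3) by auto
  then obtain h where "h \<in> Arr C" "Dom C h = Cod C \<eta>" "Cod C h = x" "Comp C h \<eta> = Id C x"
    using injective_retraction[OF assms(1,4)] by blast
  then show ?thesis
    using iso_if_completion_has_retraction[OF cat assms(2,5)]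
      complete_if_completion_has_retraction[OF cat assms(2,5)]
    by simp
qed

end
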